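(* Let $g:\mathbb{R}\to\mathbb{R}$ be a continuous function such that $g(z)=0$ has at most $r\ge1$ distinct real roots. For numbers $x_i,y_j\in[0,1]$, $(i,j)\in[d]^2$, define $\boldsymbol\Theta\in\mathbb{R}^{d\times d}$ by $\boldsymbol\Theta(i,j)=g(\max(x_i,y_j))$. Then $\mathrm{srank}(\boldsymbol\Theta)\le2r$. The same conclusion holds with $\min$ in place of $\max$.
   Context: $\mathrm{sgn}(x)=1$ if $x>0$ and $-1$ otherwise, applied entrywise. Sign rank: $\mathrm{srank}(\boldsymbol\Theta)=\min\{\mathrm{rank}(\boldsymbol\Theta'):\boldsymbol\Theta'\in\mathbb{R}^{d\times d},\ \mathrm{sgn}(\boldsymbol\Theta')=\mathrm{sgn}(\boldsymbol\Theta)\}$. *)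

theory Defs
  imports "HOL-Analysis.Analysis"
begin

text \<open>Paper's sign convention: sgn x = 1 if x > 0, and -1 otherwise (applied entrywise).\<close>
definition psgn :: "real \<Rightarrow> real" where
  "psgn x = (if x > 0 then 1 else -1)"

definition msgn :: "real^'n^'m \<Rightarrow> real^'n^'m" where
  "msgn A = (\<chi> i j. psgn (A $ i $ j))"

definition srank :: "real^'n^'n \<Rightarrow> nat" where
  "srank A = Inf {rank B | B :: real^'n^'n. msgn B = msgn A}"

end

theory Submission
  imports Defs
begin

(* Let f = psgn o g and let Z be the zero set of g. By the intermediate value theorem f is
   constant on every closed interval avoiding Z, hence so is a \<mapsto> f (max a b) for each b.
   The sign row (f (max a (y j)))_j therefore depends only on the cell of a: one of the
   card Z points of Z or one of the card Z + 1 gaps between them.  This gives 2 card Z + 1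
   sign rows; one is saved at the largest zero m, where f m = -1: after rescaling entries
   without changing signs, the row for a > m becomes a combination of a row for a < m and
   the row for a = m.  The min case reduces to max via t \<mapsto> -t. *)

definition constant_on_gaps :: "real set \<Rightarrow> (real \<Rightarrow> 'a) \<Rightarrow> bool" where
  "constant_on_gaps Z F \<longleftrightarrow> (\<forall>a b. a \<le> b \<longrightarrow> {a..b} \<inter> Z = {} \<longrightarrow> F a = F b)"

lemma constant_on_gapsD:
  assumes "constant_on_gaps Z F" "{min a b..max a b} \<inter> Z = {}"
  shows "F a = F b"
proof (cases "a \<le> b")
  case True
  then show ?thesis
    using assms unfolding constant_on_gaps_def by (simp add: min_def max_def)
next
  case False
  then have "F b = F a"
    using assms unfolding constant_on_gaps_def by (simp add: min_def max_def)
  then show ?thesis ..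
qed

lemma constant_on_gaps_psgn:
  assumes "continuous_on UNIV g"
  shows "constant_on_gaps {z. g z = 0} (\<lambda>t. psgn (g t))"
  unfolding constant_on_gaps_def
proof (intro allI impI)
  fix a b :: real
  assume "a \<le> b" and no_zero: "{a..b} \<inter> {z. g z = 0} = {}"
  have cont: "continuous_on {a..b} g"
    using assms continuous_on_subset by blast
  show "psgn (g a) = psgn (g b)"
  proof (rule ccontr)
    assume "psgn (g a) \<noteq> psgn (g b)"
    then have "g a \<le> 0 \<and> 0 \<le> g b \<or> g b \<le> 0 \<and> 0 \<le> g a"
      by (auto simp: psgn_def split: if_splits)
    then obtain t where "a \<le> t" "t \<le> b" "g t = 0"
      using IVT'[of g a 0 b] IVT2'[of g b 0 a] \<open>a \<le> b\<close> cont by blast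
    then show False
      using no_zero by auto
  qed
qed

lemma constant_on_gaps_max:
  assumes "constant_on_gaps Z F"
  shows "constant_on_gaps Z (\<lambda>a. F (max a c))"
  unfolding constant_on_gaps_def
proof (intro allI impI)
  fix a b :: real
  assume "a \<le> b" and no_zero: "{a..b} \<inter> Z = {}"
  show "F (max a c) = F (max b c)"
  proof (cases "c < b")
    case True
    then have "{max a c..max b c} \<inter> Z = {}"
      using no_zero by auto
    then show ?thesis
      using assms \<open>a \<le> b\<close> unfolding constant_on_gaps_def by simp
  qed (use \<open>a \<le> b\<close> in \<open>simp add: max_def\<close>)
qed

lemma constant_on_gaps_vec:
  assumes "\<And>j. constant_on_gaps Z (\<lambda>a. F a $ j)"
  shows "constant_on_gaps Z F"
  using assms unfolding constant_on_gaps_def by (simp add: vec_eq_iff)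

lemma
  assumes "finite Z" "constant_on_gaps Z F"
  shows finite_image_lessThan_gaps: "finite (F ` {..<m})"
    and card_image_lessThan_gaps: "card (F ` {..<m}) \<le> 2 * card {z\<in>Z. z < m} + 1"
proof -
  \<comment> \<open>\<open>cell a\<close> is twice the number of zeros below \<open>a\<close>, plus one if \<open>a\<close> is a zero:
    it numbers the points of \<open>Z\<close> and the gaps between them from left to right.\<close>
  define cell where "cell a = card {z\<in>Z. z < a} + card {z\<in>Z. z \<le> a}" for a
  have same_cell: "F a = F b" if "cell a = cell b" "a < b" for a b
  proof -
    have subs: "{z\<in>Z. z < a} \<subseteq> {z\<in>Z. z < b}" "{z\<in>Z. z \<le> a} \<subseteq> {z\<in>Z. z \<le> b}"
      using \<open>a < b\<close> by auto
    have fin: "finite {z\<in>Z. z < b}" "finite {z\<in>Z. z \<le> b}"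
      using \<open>finite Z\<close> by auto
    have cards: "card {z\<in>Z. z < a} = card {z\<in>Z. z < b}" "card {z\<in>Z. z \<le> a} = card {z\<in>Z. z \<le> b}"
      using card_mono[OF fin(1) subs(1)] card_mono[OF fin(2) subs(2)] \<open>cell a = cell b\<close>
      unfolding cell_def by linarith+
    have below: "{z\<in>Z. z < a} = {z\<in>Z. z < b}"
      by (rule card_subset_eq[OF fin(1) subs(1) cards(1)])
    have at_or_below: "{z\<in>Z. z \<le> a} = {z\<in>Z. z \<le> b}"
      by (rule card_subset_eq[OF fin(2) subs(2) cards(2)])
    have "z \<notin> Z" if "a \<le> z" "z \<le> b" for z
    proof
      assume "z \<in> Z"
      with \<open>z \<le> b\<close> at_or_below have "z \<le> a"
        by blast
      with \<open>a < b\<close> \<open>z \<in> Z\<close> have "z \<in> {z\<in>Z. z < b}"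
        by simp
      with below have "z < a"
        by blast
      with \<open>a \<le> z\<close> show False
        by simp
    qed
    then have "{a..b} \<inter> Z = {}"
      by auto
    then show ?thesis
      using assms(2) \<open>a < b\<close> unfolding constant_on_gaps_def by simp
  qed
  have F_cell: "F a = F b" if "cell a = cell b" for a b
    using same_cell[of a b] same_cell[of b a] that by (metis linorder_neqE)
  have cells: "cell ` {..<m} \<subseteq> {..2 * card {z\<in>Z. z < m}}"
  proof
    fix k assume "k \<in> cell ` {..<m}"
    then obtain a where "a < m" "k = cell a"
      by auto
    moreover have "card {z\<in>Z. z < a} \<le> card {z\<in>Z. z < m}" "card {z\<in>Z. z \<le> a} \<le> card {z\<in>Z. z < m}"
      using \<open>a < m\<close> \<open>finite Z\<close> by (auto intro!: card_mono)
    ultimately show "k \<in> {..2 * card {z\<in>Z. z < m}}"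
      unfolding cell_def by simp
  qed
  have "F a = (F \<circ> inv_into {..<m} cell) (cell a)" if "a < m" for a
  proof -
    have "cell (inv_into {..<m} cell (cell a)) = cell a"
      using that by (intro f_inv_into_f) simp
    from F_cell[OF this] show ?thesis
      by simp
  qed
  then have sub: "F ` {..<m} \<subseteq> (F \<circ> inv_into {..<m} cell) ` {..2 * card {z\<in>Z. z < m}}"
    using cells by blast
  then show "finite (F ` {..<m})"
    by (rule finite_subset) simp
  have "card (F ` {..<m}) \<le> card ((F \<circ> inv_into {..<m} cell) ` {..2 * card {z\<in>Z. z < m}})"
    by (rule card_mono[OF _ sub]) simp
  also have "\<dots> \<le> card {..2 * card {z\<in>Z. z < m}}"
    by (rule card_image_le) simp
  finally show "card (F ` {..<m}) \<le> 2 * card {z\<in>Z. z < m} + 1"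
    by simp
qed

lemma psgn_psgn [simp]: "psgn (psgn t) = psgn t"
  by (simp add: psgn_def)

lemma srank_le_card_span:
  fixes A B :: "real^'n^'n"
  assumes "finite S" "\<And>i. B $ i \<in> span S" "\<And>i j. psgn (B $ i $ j) = psgn (A $ i $ j)"
  shows "srank A \<le> card S"
proof -
  have "msgn B = msgn A"
    using assms(3) by (simp add: msgn_def)
  then have "srank A \<le> rank B"
    unfolding srank_def by (auto intro: cInf_lower)
  also have "rank B \<le> card S"
    unfolding row_rank_def using assms(1,2) by (intro dim_le_card) (auto simp: rows_def row_def)
  finally show ?thesis .
qed

lemma srank_max_zero_free:
  fixes g :: "real \<Rightarrow> real" and x y :: "'d::finite \<Rightarrow> real"
  assumes "continuous_on UNIV g" "\<And>t. g t \<noteq> 0"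
  shows "srank ((\<chi> i j. g (max (x i) (y j))) :: real^'d^'d) \<le> 1"
proof -
  have "constant_on_gaps {} (\<lambda>t. psgn (g t))"
    using constant_on_gaps_psgn[OF assms(1)] assms(2) by simp
  then have sign_const: "psgn (g t) = psgn (g 0)" for t
    by (rule constant_on_gapsD) simp
  have "srank ((\<chi> i j. g (max (x i) (y j))) :: real^'d^'d) \<le> card {(\<chi> j. psgn (g 0)) :: real^'d}"
    by (rule srank_le_card_span[where B = "\<chi> i j. psgn (g 0)"])
      (simp_all add: sign_const[of "max _ _"] span_base)
  then show ?thesis
    by simp
qed

\<comment> \<open>Rows of a matrix with the sign pattern \<open>f (max a (y j))\<close>, \<open>m\<close> being the largest zero.
  The entries are rescaled, without changing signs, so that the row for \<open>a > m\<close> can be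
  \<open>lower_row f m y (m - 1) - f (m + 1) *\<^sub>R top_row f m y\<close>; this saves one of the
  \<open>2 * card Z + 1\<close> cells.\<close>
definition lower_row :: "(real \<Rightarrow> real) \<Rightarrow> real \<Rightarrow> ('d::finite \<Rightarrow> real) \<Rightarrow> real \<Rightarrow> real^'d" where
  "lower_row f m y a =
     (\<chi> j. if y j < m then f (max a (y j)) else if y j = m then -1 else 2 * f (m + 1))"

definition top_row :: "(real \<Rightarrow> real) \<Rightarrow> real \<Rightarrow> ('d::finite \<Rightarrow> real) \<Rightarrow> real^'d" where
  "top_row f m y = (\<chi> j. if y j \<le> m then -2 else f (m + 1))"

definition witness_row :: "(real \<Rightarrow> real) \<Rightarrow> real \<Rightarrow> ('d::finite \<Rightarrow> real) \<Rightarrow> real \<Rightarrow> real^'d" where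
  "witness_row f m y a =
     (if a < m then lower_row f m y a
      else if a = m then top_row f m y
      else lower_row f m y (m - 1) - f (m + 1) *\<^sub>R top_row f m y)"

lemma witness_row_in_span:
  "witness_row f m y a \<in> span (insert (top_row f m y) (lower_row f m y ` {..<m}))"
    (is "_ \<in> span ?S")
proof -
  have lower: "lower_row f m y b \<in> span ?S" if "b < m" for b
    using that by (simp add: span_base)
  have "top_row f m y \<in> span ?S"
    by (simp add: span_base)
  with lower[of a] lower[of "m - 1"] show ?thesis
    unfolding witness_row_def by (auto intro: span_diff span_scale)
qed

lemma
  assumes "finite Z" "constant_on_gaps Z f"
  shows finite_lower_rows: "finite (lower_row f m y ` {..<m})"
    and card_lower_rows: "card (lower_row f m y ` {..<m}) \<le> 2 * card {z\<in>Z. z < m} + 1"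
proof -
  have "constant_on_gaps Z (\<lambda>a. lower_row f m y a $ j)" for j
    using constant_on_gaps_max[OF assms(2)]
    by (cases "y j < m") (simp_all add: lower_row_def constant_on_gaps_def)
  then have "constant_on_gaps Z (lower_row f m y)"
    by (rule constant_on_gaps_vec)
  with assms(1) show "finite (lower_row f m y ` {..<m})"
    and "card (lower_row f m y ` {..<m}) \<le> 2 * card {z\<in>Z. z < m} + 1"
    by (rule finite_image_lessThan_gaps, rule card_image_lessThan_gaps)
qed

lemma psgn_witness_row:
  assumes f_pm: "\<And>t. f t = 1 \<or> f t = -1" and f_m: "f m = -1"
    and f_above: "\<And>t. m < t \<Longrightarrow> f t = f (m + 1)"
  shows "psgn (witness_row f m y a $ j) = f (max a (y j))"
proof -
  let ?s = "f (m + 1)"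
  have s_pm: "?s = 1 \<or> ?s = -1"
    by (rule f_pm)
  consider "max a (y j) < m" | "max a (y j) = m" | "m < max a (y j)"
    by linarith
  then show ?thesis
  proof cases
    case 1
    moreover have "psgn (f t) = f t" for t
      using f_pm[of t] by (auto simp: psgn_def)
    ultimately show ?thesis
      by (simp add: witness_row_def lower_row_def)
  next
    case 2
    then have "witness_row f m y a $ j < 0"
      by (auto simp: witness_row_def lower_row_def top_row_def max_def split: if_splits)
    then show ?thesis
      using 2 f_m by (simp add: psgn_def)
  next
    case 3
    have "0 < ?s * witness_row f m y a $ j"
    proof (cases "m < a")
      case True
      with s_pm f_pm[of "max (m - 1) (y j)"] show ?thesis
        by (auto simp: witness_row_def lower_row_def top_row_def)
    next
      case False
      with 3 s_pm show ?thesis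
        by (auto simp: witness_row_def lower_row_def top_row_def)
    qed
    then show ?thesis
      using f_above[OF 3] s_pm by (auto simp: psgn_def zero_less_mult_iff)
  qed
qed

lemma srank_max_le_card_zeros:
  fixes g :: "real \<Rightarrow> real" and x y :: "'d::finite \<Rightarrow> real"
  assumes "continuous_on UNIV g" "finite {z. g z = 0}" "{z. g z = 0} \<noteq> {}"
  shows "srank ((\<chi> i j. g (max (x i) (y j))) :: real^'d^'d) \<le> 2 * card {z. g z = 0}"
proof -
  define Z where "Z = {z. g z = 0}"
  define f where "f t = psgn (g t)" for t
  define m where "m = Max Z"
  define S where "S = insert (top_row f m y) (lower_row f m y ` {..<m})"
  have "finite Z" "Z \<noteq> {}"
    using assms(2,3) by (simp_all add: Z_def)
  then have "m \<in> Z" and below_m: "\<And>z. z \<in> Z \<Longrightarrow> z \<le> m"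
    by (simp_all add: m_def)
  have gaps: "constant_on_gaps Z f"
    using constant_on_gaps_psgn[OF assms(1)] by (simp add: Z_def f_def[abs_def])
  have f_above: "f t = f (m + 1)" if "m < t" for t
    by (rule constant_on_gapsD[OF gaps]) (use below_m that in fastforce)
  have f_pm: "f t = 1 \<or> f t = -1" for t
    by (simp add: f_def psgn_def)
  have f_m: "f m = -1"
    using \<open>m \<in> Z\<close> by (simp add: Z_def f_def psgn_def)
  note signs = psgn_witness_row[OF f_pm f_m f_above]
  have "{z\<in>Z. z < m} = Z - {m}"
    using below_m by force
  then have "card {z\<in>Z. z < m} + 1 = card Z"
    using card_Suc_Diff1[OF \<open>finite Z\<close> \<open>m \<in> Z\<close>] by simp
  moreover have "finite S" "card S \<le> card (lower_row f m y ` {..<m}) + 1"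
    using finite_lower_rows[OF \<open>finite Z\<close> gaps, of m y] unfolding S_def
    by (simp_all add: card_insert_if)
  ultimately have "finite S" "card S \<le> 2 * card Z"
    using card_lower_rows[OF \<open>finite Z\<close> gaps, of m y] by linarith+
  have rows: "witness_row f m y a \<in> span S" for a
    unfolding S_def by (rule witness_row_in_span)
  have "srank ((\<chi> i j. g (max (x i) (y j))) :: real^'d^'d) \<le> card S"
    by (rule srank_le_card_span[where B = "\<chi> i. witness_row f m y (x i)"])
      (simp_all add: \<open>finite S\<close> rows signs f_def)
  with \<open>card S \<le> 2 * card Z\<close> show ?thesis
    by (simp add: Z_def)
qed

lemma srank_max_le:
  fixes g :: "real \<Rightarrow> real" and x y :: "'d::finite \<Rightarrow> real"
  assumes "continuous_on UNIV g" "finite {z. g z = 0}"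
  shows "srank ((\<chi> i j. g (max (x i) (y j))) :: real^'d^'d) \<le> max 1 (2 * card {z. g z = 0})"
proof (cases "{z. g z = 0} = {}")
  case True
  then have "g t \<noteq> 0" for t
    by blast
  then show ?thesis
    using srank_max_zero_free[OF assms(1), of x y] by (simp add: le_max_iff_disj)
next
  case False
  then show ?thesis
    using srank_max_le_card_zeros[OF assms False, of x y] by (simp add: le_max_iff_disj)
qed

lemma srank_min_le:
  fixes g :: "real \<Rightarrow> real" and x y :: "'d::finite \<Rightarrow> real"
  assumes "continuous_on UNIV g" "finite {z. g z = 0}"
  shows "srank ((\<chi> i j. g (min (x i) (y j))) :: real^'d^'d) \<le> max 1 (2 * card {z. g z = 0})"
proof -
  define h where "h t = g (- t)" for t
  have "continuous_on UNIV h"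
    unfolding h_def by (intro continuous_on_compose2[OF assms(1)] continuous_intros) auto
  moreover have "{z. h z = 0} = uminus ` {z. g z = 0}"
    by (force simp: h_def)
  moreover have "min a b = - max (- a) (- b)" for a b :: real
    by linarith
  ultimately show ?thesis
    using srank_max_le[of h "\<lambda>i. - x i" "\<lambda>j. - y j"] assms(2)
    by (simp add: h_def card_image)
qed

theorem proposition3:
  fixes g :: "real \<Rightarrow> real" and r :: nat
    and x y :: "'d::finite \<Rightarrow> real"
  assumes "continuous_on UNIV g"
    and "r \<ge> 1"
    and "finite {z. g z = 0}" and "card {z. g z = 0} \<le> r"
    and "\<forall>i. x i \<in> {0..1}" and "\<forall>j. y j \<in> {0..1}"
  shows "srank ((\<chi> i j. g (max (x i) (y j))) :: real^'d^'d) \<le> 2 * r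
       \<and> srank ((\<chi> i j. g (min (x i) (y j))) :: real^'d^'d) \<le> 2 * r"
proof -
  have "max 1 (2 * card {z. g z = 0}) \<le> 2 * r"
    using assms(2,4) by simp
  then show ?thesis
    using srank_max_le[OF assms(1,3)] srank_min_le[OF assms(1,3)] order_trans by blast
qed

end
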